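(* Let $S$ be a semilattice. Then the Banach algebra $\ell^1(S)$ is AMNM.
   Context: A semilattice is a commutative semigroup in which every element is idempotent. $\ell^1(S)$ is the Banach space of functions $a:S\to\mathbb C$ with $\|a\|=\sum_{s\in S}|a(s)|<\infty$, made into a Banach algebra by convolution, i.e. the bilinear extension of $\delta_x*\delta_y=\delta_{xy}$. For Banach algebras $A,B$ and a bounded linear map $T:A\to B$, the multiplicative defect is $\operatorname{def}(T)=\sup\{\|T(xy)-T(x)T(y)\|:\ x,y\in A,\ \|x\|\le1,\ \|y\|\le1\}$. $\operatorname{Mult}(A,B)$ denotes the set of bounded linear multiplicative maps $A\to B$ (including the zero map). A Banach algebra $A$ is called AMNM if for every $\varepsilon>0$ there is $\delta>0$ such that every $\psi\in A^*$ with $\operatorname{def}(\psi)\le\delta$ satisfies $\operatorname{dist}_{A^*}(\psi,\operatorname{Mult}(A,\mathbb C))\le\varepsilon$. *)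

theory Defs
  imports "HOL-Analysis.Analysis"
begin

text \<open>The semilattice is a type 'a with an operation f satisfying the library
locale semilattice (associative, commutative, idempotent).\<close>

definition l1 :: "('a \<Rightarrow> complex) set" where
  "l1 = {a. (\<lambda>s. norm (a s)) summable_on UNIV}"

definition l1_norm :: "('a \<Rightarrow> complex) \<Rightarrow> real" where
  "l1_norm a = (\<Sum>\<^sub>\<infinity>s. norm (a s))"

text \<open>Convolution: bilinear extension of delta_x * delta_y = delta_(xy).\<close>
definition conv :: "('a \<Rightarrow> 'a \<Rightarrow> 'a) \<Rightarrow> ('a \<Rightarrow> complex) \<Rightarrow> ('a \<Rightarrow> complex) \<Rightarrow> 'a \<Rightarrow> complex" where
  "conv f a b t = (\<Sum>\<^sub>\<infinity>(x,y)\<in>{(x,y). f x y = t}. a x * b y)"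

definition l1_dual :: "(('a \<Rightarrow> complex) \<Rightarrow> complex) set" where
  "l1_dual = {\<psi>. (\<forall>a\<in>l1. \<forall>b\<in>l1. \<psi> (\<lambda>s. a s + b s) = \<psi> a + \<psi> b)
                 \<and> (\<forall>a\<in>l1. \<forall>c. \<psi> (\<lambda>s. c * a s) = c * \<psi> a)
                 \<and> (\<exists>C. \<forall>a\<in>l1. norm (\<psi> a) \<le> C * l1_norm a)}"

definition dual_norm :: "(('a \<Rightarrow> complex) \<Rightarrow> complex) \<Rightarrow> real" where
  "dual_norm \<psi> = Sup {norm (\<psi> a) | a. a \<in> l1 \<and> l1_norm a \<le> 1}"

definition mult_defect :: "('a \<Rightarrow> 'a \<Rightarrow> 'a) \<Rightarrow> (('a \<Rightarrow> complex) \<Rightarrow> complex) \<Rightarrow> real" where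
  "mult_defect f \<psi> = Sup {norm (\<psi> (conv f a b) - \<psi> a * \<psi> b) | a b.
       a \<in> l1 \<and> b \<in> l1 \<and> l1_norm a \<le> 1 \<and> l1_norm b \<le> 1}"

text \<open>Mult(l1(S), C): bounded linear multiplicative functionals (incl. zero).\<close>
definition l1_mult :: "('a \<Rightarrow> 'a \<Rightarrow> 'a) \<Rightarrow> (('a \<Rightarrow> complex) \<Rightarrow> complex) set" where
  "l1_mult f = {\<phi>\<in>l1_dual. \<forall>a\<in>l1. \<forall>b\<in>l1. \<phi> (conv f a b) = \<phi> a * \<phi> b}"

definition dist_mult :: "('a \<Rightarrow> 'a \<Rightarrow> 'a) \<Rightarrow> (('a \<Rightarrow> complex) \<Rightarrow> complex) \<Rightarrow> real" where
  "dist_mult f \<psi> = Inf {dual_norm (\<lambda>a. \<psi> a - \<phi> a) | \<phi>. \<phi> \<in> l1_mult f}"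

definition l1_AMNM :: "('a \<Rightarrow> 'a \<Rightarrow> 'a) \<Rightarrow> bool" where
  "l1_AMNM f \<longleftrightarrow> (\<forall>\<epsilon>>0. \<exists>\<delta>>0. \<forall>\<psi>\<in>l1_dual. mult_defect f \<psi> \<le> \<delta> \<longrightarrow> dist_mult f \<psi> \<le> \<epsilon>)"

end

theory Submission
  imports Defs
begin

text \<open>
  Let \<psi> be a bounded functional on l1(S) with small multiplicative
  defect \<delta>.  Its values p(x) = \<psi>(\<delta>_x) on the point masses satisfy
  |p(xy) - p(x)p(y)| \<le> \<delta>, and because every element of S is idempotent,
  |p(x) - p(x)^2| \<le> \<delta>.  Hence each p(x) lies within 2\<delta> of 0 or of 1, and rounding
  p gives a {0,1}-valued semicharacter \<theta> of S.  The functional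
  \<phi>(a) = \<Sum>_s a(s) \<theta>(s) is then multiplicative on l1(S), and \<psi> - \<phi> is a bounded
  functional which is at most 2\<delta> on every point mass, so its norm is at most 2\<delta>.
  Thus dist(\<psi>, Mult) \<le> 2 def(\<psi>) whenever def(\<psi>) \<le> 1/16.
\<close>

section \<open>Absolutely summable families\<close>

lemma abs_summable_tensor:
  fixes u v :: "'a \<Rightarrow> 'c::real_normed_div_algebra"
  assumes u: "(\<lambda>x. norm (u x)) summable_on UNIV" and v: "(\<lambda>x. norm (v x)) summable_on UNIV"
  shows "(\<lambda>p. norm (u (fst p) * v (snd p))) summable_on UNIV"
proof -
  have "(\<lambda>p. norm (u (fst p) * v (snd p))) summable_on Sigma UNIV (\<lambda>_. UNIV)"
  proof (rule summable_on_SigmaI[where g = "\<lambda>x. norm (u x) * (\<Sum>\<^sub>\<infinity>y. norm (v y))"])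
    show "((\<lambda>y. norm (u (fst (x, y)) * v (snd (x, y)))) has_sum
            norm (u x) * (\<Sum>\<^sub>\<infinity>y. norm (v y))) UNIV" for x
      using has_sum_cmult_right[OF has_sum_infsum[OF v]] by (simp add: norm_mult)
    show "(\<lambda>x. norm (u x) * (\<Sum>\<^sub>\<infinity>y. norm (v y))) summable_on UNIV"
      using summable_on_cmult_left[OF u] .
  qed auto
  then show ?thesis by simp
qed

lemma infsum_tensor:
  fixes u v :: "'a \<Rightarrow> 'c::{real_normed_field, banach}"
  assumes u: "(\<lambda>x. norm (u x)) summable_on UNIV" and v: "(\<lambda>x. norm (v x)) summable_on UNIV"
  shows "(\<Sum>\<^sub>\<infinity>p. u (fst p) * v (snd p)) = (\<Sum>\<^sub>\<infinity>x. u x) * (\<Sum>\<^sub>\<infinity>y. v y)"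
proof -
  have summable: "(\<lambda>p. u (fst p) * v (snd p)) summable_on Sigma UNIV (\<lambda>_. UNIV)"
    using abs_summable_summable[OF abs_summable_tensor[OF u v]] by simp
  have "(\<Sum>\<^sub>\<infinity>p. u (fst p) * v (snd p)) = (\<Sum>\<^sub>\<infinity>x. \<Sum>\<^sub>\<infinity>y. u x * v y)"
    using infsum_Sigma_banach[OF summable] by simp
  also have "\<dots> = (\<Sum>\<^sub>\<infinity>x. u x * (\<Sum>\<^sub>\<infinity>y. v y))"
    by (simp add: infsum_cmult_right')
  also have "\<dots> = (\<Sum>\<^sub>\<infinity>x. u x) * (\<Sum>\<^sub>\<infinity>y. v y)"
    by (simp add: infsum_cmult_left')
  finally show ?thesis .
qed

lemma infsum_over_fibres:
  fixes h :: "'b \<Rightarrow> 'c::banach" and k :: "'b \<Rightarrow> 'd"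
  assumes h: "h summable_on UNIV"
  shows "(\<lambda>t. \<Sum>\<^sub>\<infinity>p\<in>{p. k p = t}. h p) summable_on UNIV"
    and "(\<Sum>\<^sub>\<infinity>t. \<Sum>\<^sub>\<infinity>p\<in>{p. k p = t}. h p) = (\<Sum>\<^sub>\<infinity>p. h p)"
proof -
  define H where "H = (\<lambda>q::'d \<times> 'b. h (snd q))"
  have inj: "inj_on (\<lambda>p. (k p, p)) UNIV" by (auto simp: inj_on_def)
  have img: "(\<lambda>p. (k p, p)) ` UNIV = Sigma UNIV (\<lambda>t. {p. k p = t})" by auto
  have H_summable: "H summable_on Sigma UNIV (\<lambda>t. {p. k p = t})"
    using summable_on_reindex[OF inj, of H] h img by (simp add: H_def o_def)
  have H_sum: "infsum H (Sigma UNIV (\<lambda>t. {p. k p = t})) = infsum h UNIV"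
    using infsum_reindex[OF inj, of H] img by (simp add: H_def o_def)
  have fibre_summable: "\<And>t. (\<lambda>p. H (t, p)) summable_on {p. k p = t}"
    using summable_on_subset_banach[OF h] by (simp add: H_def)
  show "(\<lambda>t. \<Sum>\<^sub>\<infinity>p\<in>{p. k p = t}. h p) summable_on UNIV"
    using summable_on_SigmaD[OF H_summable fibre_summable] by (simp add: H_def)
  show "(\<Sum>\<^sub>\<infinity>t. \<Sum>\<^sub>\<infinity>p\<in>{p. k p = t}. h p) = (\<Sum>\<^sub>\<infinity>p. h p)"
    using infsum_Sigma_banach[OF H_summable] H_sum by (simp add: H_def)
qed


section \<open>The space l1\<close>

lemma l1_iff_summable: "a \<in> l1 \<longleftrightarrow> (a :: 'a \<Rightarrow> complex) summable_on UNIV"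
  unfolding l1_def using summable_on_iff_abs_summable_on_complex by auto

lemma l1_norm_nonneg: "0 \<le> l1_norm a"
  unfolding l1_norm_def by (rule infsum_nonneg) auto

lemma l1_dominated:
  assumes a: "a \<in> l1" and dom: "\<And>s. norm (b s) \<le> norm (a s)"
  shows "b \<in> l1" and "l1_norm b \<le> l1_norm a"
proof -
  have an: "(\<lambda>s. norm (a s)) summable_on UNIV" using a unfolding l1_def by simp
  show bn: "b \<in> l1" unfolding l1_def mem_Collect_eq
    by (rule Infinite_Sum.abs_summable_on_comparison_test'[OF an]) (rule dom)
  show "l1_norm b \<le> l1_norm a" unfolding l1_norm_def
    by (rule infsum_mono[OF _ an dom]) (use bn in \<open>simp add: l1_def\<close>)
qed

lemma l1_finite_support:
  assumes "finite F" and "\<And>s. s \<notin> F \<Longrightarrow> a s = 0"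
  shows "a \<in> l1"
proof -
  have "a summable_on UNIV"
    using summable_on_cong_neutral[of F UNIV a a] assms by auto
  then show ?thesis using l1_iff_summable by blast
qed

lemma l1_zero: "(\<lambda>s. 0) \<in> l1" and l1_norm_zero: "l1_norm (\<lambda>s. 0) = 0"
  by (auto intro: l1_finite_support[of "{}"] simp: l1_norm_def)

lemma sum_le_l1_norm:
  assumes a: "a \<in> l1" and F: "finite F"
  shows "(\<Sum>s\<in>F. norm (a s)) \<le> l1_norm a"
  unfolding l1_norm_def infsum_finite[OF F, symmetric]
  by (rule infsum_mono2) (use a F in \<open>auto simp: l1_def\<close>)

lemma l1_norm_remove_finite:
  assumes a: "a \<in> l1" and F: "finite F"
  shows "l1_norm (\<lambda>s. if s \<in> F then 0 else a s) = l1_norm a - (\<Sum>s\<in>F. norm (a s))"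
proof -
  have an: "(\<lambda>s. norm (a s)) summable_on UNIV" using a unfolding l1_def by simp
  have "l1_norm (\<lambda>s. if s \<in> F then 0 else a s) = (\<Sum>\<^sub>\<infinity>s\<in>UNIV - F. norm (a s))"
    unfolding l1_norm_def by (rule infsum_cong_neutral) auto
  also have "\<dots> = l1_norm a - (\<Sum>s\<in>F. norm (a s))"
    unfolding l1_norm_def using F an by (subst infsum_Diff) auto
  finally show ?thesis .
qed

lemma l1_norm_finite_approx:
  assumes a: "a \<in> l1" and e: "e > 0"
  obtains F where "finite F" and "l1_norm a - (\<Sum>s\<in>F. norm (a s)) < e"
proof -
  have an: "(\<lambda>s. norm (a s)) summable_on UNIV" using a unfolding l1_def by simp
  have "\<forall>\<^sub>F G in finite_subsets_at_top UNIV. dist (\<Sum>s\<in>G. norm (a s)) (l1_norm a) < e"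
    using infsum_tendsto[OF an] e unfolding l1_norm_def tendsto_iff by blast
  then obtain F where "finite F" and "dist (\<Sum>s\<in>F. norm (a s)) (l1_norm a) < e"
    unfolding eventually_finite_subsets_at_top by blast
  then show ?thesis using that by (simp add: dist_real_def)
qed

definition point_mass :: "'a \<Rightarrow> 'a \<Rightarrow> complex" where
  "point_mass x = (\<lambda>s. if s = x then 1 else 0)"

lemma point_mass_l1: "point_mass x \<in> l1"
  unfolding point_mass_def by (rule l1_finite_support[of "{x}"]) auto

lemma l1_norm_point_mass: "l1_norm (point_mass x) = 1"
proof -
  have "l1_norm (point_mass x) = (\<Sum>\<^sub>\<infinity>s\<in>{x}. norm (point_mass x s))"
    unfolding l1_norm_def by (rule infsum_cong_neutral) (auto simp: point_mass_def)
  then show ?thesis by (simp add: point_mass_def)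
qed

section \<open>Convolution\<close>

lemma conv_as_fibre_sum:
  "conv f a b t = (\<Sum>\<^sub>\<infinity>p\<in>{p. case_prod f p = t}. a (fst p) * b (snd p))"
  unfolding conv_def by (simp add: case_prod_beta')

lemma conv_l1:
  assumes a: "a \<in> l1" and b: "b \<in> l1"
  shows "conv f a b \<in> l1" and "l1_norm (conv f a b) \<le> l1_norm a * l1_norm b"
proof -
  define h where "h = (\<lambda>p. a (fst p) * b (snd p))"
  have h_abs: "(\<lambda>p. norm (h p)) summable_on UNIV"
    unfolding h_def using abs_summable_tensor a b unfolding l1_def by blast
  have h_sum: "h summable_on UNIV" using abs_summable_summable[OF h_abs] .
  have conv_eq: "conv f a b = (\<lambda>t. \<Sum>\<^sub>\<infinity>p\<in>{p. case_prod f p = t}. h p)"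
    by (auto simp: conv_as_fibre_sum h_def)
  show conv_in: "conv f a b \<in> l1"
    unfolding conv_eq l1_iff_summable by (rule infsum_over_fibres(1)[OF h_sum])
  have fibre_bound: "norm (conv f a b t) \<le> (\<Sum>\<^sub>\<infinity>p\<in>{p. case_prod f p = t}. norm (h p))" for t
    unfolding conv_eq by (rule norm_infsum_bound, rule summable_on_subset_banach[OF h_abs]) auto
  have "l1_norm (conv f a b) \<le> (\<Sum>\<^sub>\<infinity>t. \<Sum>\<^sub>\<infinity>p\<in>{p. case_prod f p = t}. norm (h p))"
    unfolding l1_norm_def
    by (rule infsum_mono[OF _ infsum_over_fibres(1)[OF h_abs] fibre_bound])
       (use conv_in in \<open>simp add: l1_def\<close>)
  also have "\<dots> = (\<Sum>\<^sub>\<infinity>p. norm (h p))" by (rule infsum_over_fibres(2)[OF h_abs])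
  also have "\<dots> = l1_norm a * l1_norm b"
    using infsum_tensor[of "\<lambda>s. norm (a s)" "\<lambda>s. norm (b s)"] a b
    unfolding h_def l1_norm_def l1_def by (simp add: norm_mult)
  finally show "l1_norm (conv f a b) \<le> l1_norm a * l1_norm b" .
qed

lemma conv_point_mass: "conv f (point_mass x) (point_mass y) = point_mass (f x y)"
proof
  fix t
  have "conv f (point_mass x) (point_mass y) t = (\<Sum>\<^sub>\<infinity>p\<in>{p. case_prod f p = t}. if p = (x, y) then 1 else 0)"
    unfolding conv_as_fibre_sum by (rule infsum_cong) (auto simp: point_mass_def prod_eq_iff)
  also have "\<dots> = (if f x y = t then 1 else 0)"
  proof (cases "f x y = t")
    case True
    then have "(\<Sum>\<^sub>\<infinity>p\<in>{p. case_prod f p = t}. if p = (x, y) then 1 else 0) =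
               (\<Sum>\<^sub>\<infinity>p\<in>{(x, y)}. if p = (x, y) then 1 else (0::complex))"
      by (intro infsum_cong_neutral) auto
    then show ?thesis using True by simp
  qed (auto intro: infsum_0)
  finally show "conv f (point_mass x) (point_mass y) t = point_mass (f x y) t"
    by (simp add: point_mass_def eq_commute)
qed


section \<open>Functionals induced by semicharacters\<close>

definition char_functional :: "('a \<Rightarrow> complex) \<Rightarrow> ('a \<Rightarrow> complex) \<Rightarrow> complex" where
  "char_functional \<theta> a = (\<Sum>\<^sub>\<infinity>s. a s * \<theta> s)"

lemma weighted_l1:
  assumes bound: "\<And>s. norm (\<theta> s) \<le> 1" and a: "a \<in> l1"
  shows "(\<lambda>s. a s * \<theta> s) \<in> l1" and "l1_norm (\<lambda>s. a s * \<theta> s) \<le> l1_norm a"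
  using l1_dominated[OF a, of "\<lambda>s. a s * \<theta> s"] bound
  by (simp_all add: norm_mult mult_left_le)

lemma norm_infsum_le_l1_norm:
  assumes "a \<in> l1"
  shows "norm (\<Sum>\<^sub>\<infinity>s. a s) \<le> l1_norm a"
  unfolding l1_norm_def by (rule norm_infsum_bound) (use assms in \<open>simp add: l1_def\<close>)

lemma char_functional_bound:
  assumes bound: "\<And>s. norm (\<theta> s) \<le> 1" and a: "a \<in> l1"
  shows "norm (char_functional \<theta> a) \<le> l1_norm a"
  unfolding char_functional_def
  using norm_infsum_le_l1_norm[OF weighted_l1(1)[of \<theta>, OF bound a]]
    weighted_l1(2)[of \<theta>, OF bound a]
  by linarith

lemma char_functional_dual:
  assumes bound: "\<And>s. norm (\<theta> s) \<le> 1"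
  shows "char_functional \<theta> \<in> l1_dual"
  unfolding l1_dual_def
proof (intro CollectI conjI ballI allI)
  fix a b :: "'a \<Rightarrow> complex" assume a: "a \<in> l1" and b: "b \<in> l1"
  show "char_functional \<theta> (\<lambda>s. a s + b s) = char_functional \<theta> a + char_functional \<theta> b"
    using infsum_add[of "\<lambda>s. a s * \<theta> s" UNIV "\<lambda>s. b s * \<theta> s"]
      weighted_l1(1)[of \<theta>, OF bound a] weighted_l1(1)[of \<theta>, OF bound b]
    unfolding char_functional_def l1_iff_summable by (simp add: distrib_right)
next
  fix a :: "'a \<Rightarrow> complex" and c
  show "char_functional \<theta> (\<lambda>s. c * a s) = c * char_functional \<theta> a"
    unfolding char_functional_def by (simp add: mult.assoc infsum_cmult_right')
next
  show "\<exists>C. \<forall>a\<in>l1. norm (char_functional \<theta> a) \<le> C * l1_norm a"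
    using char_functional_bound[of \<theta>, OF bound] by (intro exI[of _ 1]) auto
qed

lemma char_functional_point_mass: "char_functional \<theta> (point_mass x) = \<theta> x"
proof -
  have "char_functional \<theta> (point_mass x) = (\<Sum>\<^sub>\<infinity>s\<in>{x}. point_mass x s * \<theta> s)"
    unfolding char_functional_def by (rule infsum_cong_neutral) (auto simp: point_mass_def)
  then show ?thesis by (simp add: point_mass_def)
qed

lemma char_functional_multiplicative:
  assumes bound: "\<And>s. norm (\<theta> s) \<le> 1" and mult: "\<And>x y. \<theta> (f x y) = \<theta> x * \<theta> y"
  shows "char_functional \<theta> \<in> l1_mult f"
  unfolding l1_mult_def
proof (intro CollectI conjI ballI char_functional_dual[of \<theta>, OF bound])
  fix a b :: "'a \<Rightarrow> complex" assume a: "a \<in> l1" and b: "b \<in> l1"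
  define u where "u = (\<lambda>s. a s * \<theta> s)"
  define v where "v = (\<lambda>s. b s * \<theta> s)"
  define h where "h = (\<lambda>p. u (fst p) * v (snd p))"
  have u: "(\<lambda>x. norm (u x)) summable_on UNIV" and v: "(\<lambda>x. norm (v x)) summable_on UNIV"
    using weighted_l1(1)[of \<theta>, OF bound a] weighted_l1(1)[of \<theta>, OF bound b]
    unfolding u_def v_def l1_def by auto
  have h: "h summable_on UNIV"
    unfolding h_def by (rule abs_summable_summable[OF abs_summable_tensor[OF u v]])
  have fibre: "conv f a b t * \<theta> t = (\<Sum>\<^sub>\<infinity>p\<in>{p. case_prod f p = t}. h p)" for t
  proof -
    have "conv f a b t * \<theta> t = (\<Sum>\<^sub>\<infinity>p\<in>{p. case_prod f p = t}. a (fst p) * b (snd p) * \<theta> t)"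
      unfolding conv_as_fibre_sum by (simp add: infsum_cmult_left')
    also have "\<dots> = (\<Sum>\<^sub>\<infinity>p\<in>{p. case_prod f p = t}. h p)"
      by (rule infsum_cong) (auto simp: h_def u_def v_def mult)
    finally show ?thesis .
  qed
  have "char_functional \<theta> (conv f a b) = (\<Sum>\<^sub>\<infinity>t. \<Sum>\<^sub>\<infinity>p\<in>{p. case_prod f p = t}. h p)"
    unfolding char_functional_def fibre ..
  also have "\<dots> = (\<Sum>\<^sub>\<infinity>p. h p)" by (rule infsum_over_fibres(2)[OF h])
  also have "\<dots> = char_functional \<theta> a * char_functional \<theta> b"
    unfolding h_def infsum_tensor[OF u v] by (simp add: char_functional_def u_def v_def)
  finally show "char_functional \<theta> (conv f a b) = char_functional \<theta> a * char_functional \<theta> b" .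
qed


section \<open>Bounded functionals on l1\<close>

lemma l1_dual_add:
  "D \<in> l1_dual \<Longrightarrow> a \<in> l1 \<Longrightarrow> b \<in> l1 \<Longrightarrow> D (\<lambda>s. a s + b s) = D a + D b"
  unfolding l1_dual_def by blast

lemma l1_dual_scale: "D \<in> l1_dual \<Longrightarrow> a \<in> l1 \<Longrightarrow> D (\<lambda>s. c * a s) = c * D a"
  unfolding l1_dual_def by blast

lemma l1_dual_zero: "D \<in> l1_dual \<Longrightarrow> D (\<lambda>s. 0) = 0"
  using l1_dual_scale[OF _ l1_zero, of D 0] by simp

lemma l1_dual_bounded:
  assumes "D \<in> l1_dual"
  obtains K where "K \<ge> 0" and "\<And>a. a \<in> l1 \<Longrightarrow> norm (D a) \<le> K * l1_norm a"
proof -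
  obtain C where C: "\<And>a. a \<in> l1 \<Longrightarrow> norm (D a) \<le> C * l1_norm a"
    using assms unfolding l1_dual_def by blast
  have "norm (D a) \<le> \<bar>C\<bar> * l1_norm a" if "a \<in> l1" for a
    using C[OF that] mult_right_mono[OF abs_ge_self l1_norm_nonneg] by (rule order_trans)
  then show ?thesis using that[of "\<bar>C\<bar>"] by simp
qed

lemma l1_dual_ball_bound:
  assumes "D \<in> l1_dual"
  obtains K where "K \<ge> 0" and "\<And>a. a \<in> l1 \<Longrightarrow> l1_norm a \<le> 1 \<Longrightarrow> norm (D a) \<le> K"
proof -
  obtain K where K: "K \<ge> 0" "\<And>a. a \<in> l1 \<Longrightarrow> norm (D a) \<le> K * l1_norm a"
    using l1_dual_bounded[OF assms] by blast
  have "norm (D a) \<le> K" if "a \<in> l1" "l1_norm a \<le> 1" for a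
    using K(2)[OF that(1)] mult_left_mono[OF that(2) K(1)] by simp
  then show ?thesis using that K(1) by blast
qed

lemma l1_dual_diff:
  assumes \<psi>: "\<psi> \<in> l1_dual" and \<phi>: "\<phi> \<in> l1_dual"
  shows "(\<lambda>a. \<psi> a - \<phi> a) \<in> l1_dual"
proof -
  obtain K where K: "\<And>a. a \<in> l1 \<Longrightarrow> norm (\<psi> a) \<le> K * l1_norm a"
    using l1_dual_bounded[OF \<psi>] by blast
  obtain L where L: "\<And>a. a \<in> l1 \<Longrightarrow> norm (\<phi> a) \<le> L * l1_norm a"
    using l1_dual_bounded[OF \<phi>] by blast
  have "norm (\<psi> a - \<phi> a) \<le> (K + L) * l1_norm a" if "a \<in> l1" for a
    using norm_triangle_ineq4[of "\<psi> a" "\<phi> a"] K[OF that] L[OF that]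
    by (simp add: distrib_right)
  then have "\<exists>C. \<forall>a\<in>l1. norm (\<psi> a - \<phi> a) \<le> C * l1_norm a" by blast
  then show ?thesis
    using l1_dual_add[OF \<psi>] l1_dual_add[OF \<phi>] l1_dual_scale[OF \<psi>] l1_dual_scale[OF \<phi>]
    unfolding l1_dual_def by (auto simp: algebra_simps)
qed

lemma dual_norm_nonneg:
  assumes "D \<in> l1_dual"
  shows "0 \<le> dual_norm D"
proof -
  obtain K where K: "\<And>a. a \<in> l1 \<Longrightarrow> l1_norm a \<le> 1 \<Longrightarrow> norm (D a) \<le> K"
    using l1_dual_ball_bound[OF assms] by blast
  let ?S = "{norm (D a) | a. a \<in> l1 \<and> l1_norm a \<le> 1}"
  have "norm (D (\<lambda>s. 0)) \<in> ?S" by (intro CollectI exI[of _ "\<lambda>s. 0"]) (simp add: l1_zero l1_norm_zero)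
  moreover have "bdd_above ?S" using K by (auto intro!: bdd_aboveI[of _ K])
  ultimately have "norm (D (\<lambda>s. 0)) \<le> Sup ?S" by (rule cSup_upper)
  then show ?thesis unfolding dual_norm_def using norm_ge_zero order_trans by blast
qed

lemma dual_norm_le:
  fixes D :: "('a \<Rightarrow> complex) \<Rightarrow> complex"
  assumes "\<And>a. a \<in> l1 \<Longrightarrow> l1_norm a \<le> 1 \<Longrightarrow> norm (D a) \<le> K"
  shows "dual_norm D \<le> K"
proof -
  have "norm (D (\<lambda>s. 0)) \<in> {norm (D a) | a. a \<in> l1 \<and> l1_norm a \<le> 1}"
    by (intro CollectI exI[of _ "\<lambda>s. 0"]) (simp add: l1_zero l1_norm_zero)
  then show ?thesis unfolding dual_norm_def by (intro cSup_least) (auto intro: assms)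
qed

text \<open>A bounded functional that is at most \<eta> on every point mass has norm at most \<eta>:
  first on finitely supported elements by linearity, then in general because the
  l1 norm of the remaining tail can be made arbitrarily small.\<close>
lemma l1_dual_finite_part_bound:
  assumes D: "D \<in> l1_dual" and point: "\<And>x. norm (D (point_mass x)) \<le> \<eta>" and F: "finite F"
  shows "norm (D (\<lambda>s. if s \<in> F then a s else 0)) \<le> \<eta> * (\<Sum>s\<in>F. norm (a s))"
  using F
proof (induction F rule: finite_induct)
  case empty
  then show ?case using l1_dual_zero[OF D] by simp
next
  case (insert x F)
  have split: "(\<lambda>s. if s \<in> insert x F then a s else 0)
             = (\<lambda>s. (if s \<in> F then a s else 0) + a x * point_mass x s)"
    using insert.hyps(2) by (auto simp: point_mass_def)
  have "(\<lambda>s. if s \<in> F then a s else 0) \<in> l1"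
    by (rule l1_finite_support[OF insert.hyps(1)]) auto
  moreover have "(\<lambda>s. a x * point_mass x s) \<in> l1"
    by (rule l1_finite_support[of "{x}"]) (auto simp: point_mass_def)
  ultimately have "D (\<lambda>s. if s \<in> insert x F then a s else 0)
           = D (\<lambda>s. if s \<in> F then a s else 0) + D (\<lambda>s. a x * point_mass x s)"
    unfolding split by (rule l1_dual_add[OF D])
  also have "D (\<lambda>s. a x * point_mass x s) = a x * D (point_mass x)"
    by (rule l1_dual_scale[OF D point_mass_l1])
  finally have "D (\<lambda>s. if s \<in> insert x F then a s else 0)
           = D (\<lambda>s. if s \<in> F then a s else 0) + a x * D (point_mass x)" .
  then have "norm (D (\<lambda>s. if s \<in> insert x F then a s else 0))
           \<le> norm (D (\<lambda>s. if s \<in> F then a s else 0)) + norm (a x) * norm (D (point_mass x))"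
    by (metis norm_mult norm_triangle_ineq)
  also have "\<dots> \<le> \<eta> * (\<Sum>s\<in>F. norm (a s)) + norm (a x) * \<eta>"
    using insert.IH point[of x] by (intro add_mono mult_left_mono) auto
  finally show ?case using insert.hyps by (simp add: algebra_simps)
qed

lemma l1_dual_bound_from_point_masses:
  assumes D: "D \<in> l1_dual" and point: "\<And>x. norm (D (point_mass x)) \<le> \<eta>" and a: "a \<in> l1"
  shows "norm (D a) \<le> \<eta> * l1_norm a"
proof (rule field_le_epsilon)
  fix e :: real assume e: "0 < e"
  obtain K where K0: "K \<ge> 0" and K: "\<And>a. a \<in> l1 \<Longrightarrow> norm (D a) \<le> K * l1_norm a"
    using l1_dual_bounded[OF D] by blast
  have "e / (K + 1) > 0" using e K0 by simp
  then obtain F where F: "finite F" and tail: "l1_norm a - (\<Sum>s\<in>F. norm (a s)) < e / (K + 1)"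
    using l1_norm_finite_approx[OF a] by blast
  define head where "head = (\<lambda>s. if s \<in> F then a s else 0)"
  define rest where "rest = (\<lambda>s. if s \<in> F then 0 else a s)"
  have head_l1: "head \<in> l1" unfolding head_def by (rule l1_finite_support[OF F]) auto
  have rest_l1: "rest \<in> l1" unfolding rest_def by (rule l1_dominated(1)[OF a]) auto
  have \<eta>0: "0 \<le> \<eta>" using point[of undefined] norm_ge_zero order_trans by blast
  have "(\<lambda>s. head s + rest s) = a" by (auto simp: head_def rest_def)
  then have "D a = D head + D rest" using l1_dual_add[OF D head_l1 rest_l1] by simp
  then have "norm (D a) \<le> norm (D head) + norm (D rest)" by (simp add: norm_triangle_ineq)
  also have "norm (D head) \<le> \<eta> * l1_norm a"
    using l1_dual_finite_part_bound[OF D point F, of a] mult_left_mono[OF sum_le_l1_norm[OF a F] \<eta>0]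
    unfolding head_def by linarith
  also have "norm (D rest) \<le> K * (e / (K + 1))"
  proof -
    have "l1_norm rest \<le> e / (K + 1)"
      using tail l1_norm_remove_finite[OF a F] unfolding rest_def by simp
    then show ?thesis using K[OF rest_l1] mult_left_mono[OF _ K0] by (meson order_trans)
  qed
  also have "K * (e / (K + 1)) \<le> e"
    using e K0 by (simp add: field_simps)
  finally show "norm (D a) \<le> \<eta> * l1_norm a + e" by simp
qed

section \<open>Multiplicative defect and distance to the multiplicative functionals\<close>

text \<open>The defect bounds the multiplicativity error on each pair of unit vectors (the
  set defining it is bounded above since \<psi> is bounded and convolution is contractive).\<close>
lemma mult_defect_upper:
  assumes \<psi>: "\<psi> \<in> l1_dual"
    and a: "a \<in> l1" "l1_norm a \<le> 1" and b: "b \<in> l1" "l1_norm b \<le> 1"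
  shows "norm (\<psi> (conv f a b) - \<psi> a * \<psi> b) \<le> mult_defect f \<psi>"
proof -
  obtain K where K0: "K \<ge> 0" and K: "\<And>a. a \<in> l1 \<Longrightarrow> l1_norm a \<le> 1 \<Longrightarrow> norm (\<psi> a) \<le> K"
    using l1_dual_ball_bound[OF \<psi>] by blast
  let ?S = "{norm (\<psi> (conv f a b) - \<psi> a * \<psi> b) | a b.
              a \<in> l1 \<and> b \<in> l1 \<and> l1_norm a \<le> 1 \<and> l1_norm b \<le> 1}"
  have "r \<le> K + K * K" if r_in: "r \<in> ?S" for r
  proof -
    obtain a b where r: "r = norm (\<psi> (conv f a b) - \<psi> a * \<psi> b)"
      and ab: "a \<in> l1" "b \<in> l1" "l1_norm a \<le> 1" "l1_norm b \<le> 1"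
      using r_in by blast
    have "l1_norm (conv f a b) \<le> 1"
      using conv_l1(2)[OF ab(1,2), of f] mult_le_one[OF ab(3) l1_norm_nonneg ab(4)] by linarith
    then have "norm (\<psi> (conv f a b)) \<le> K" using K conv_l1(1)[OF ab(1,2)] by blast
    moreover have "norm (\<psi> a * \<psi> b) \<le> K * K"
      unfolding norm_mult using K ab K0 by (intro mult_mono) auto
    ultimately show ?thesis
      unfolding r using norm_triangle_ineq4[of "\<psi> (conv f a b)" "\<psi> a * \<psi> b"] by linarith
  qed
  then have "bdd_above ?S" by (rule bdd_aboveI)
  then show ?thesis unfolding mult_defect_def by (rule cSup_upper[rotated]) (use a b in blast)
qed

lemma mult_defect_point_masses:
  assumes "\<psi> \<in> l1_dual"
  shows "norm (\<psi> (point_mass (f x y)) - \<psi> (point_mass x) * \<psi> (point_mass y)) \<le> mult_defect f \<psi>"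
  using mult_defect_upper[OF assms point_mass_l1 _ point_mass_l1, of x y f]
  by (simp add: l1_norm_point_mass conv_point_mass)

lemma dist_mult_le:
  assumes \<psi>: "\<psi> \<in> l1_dual" and \<phi>: "\<phi> \<in> l1_mult f"
  shows "dist_mult f \<psi> \<le> dual_norm (\<lambda>a. \<psi> a - \<phi> a)"
proof -
  have "0 \<le> dual_norm (\<lambda>a. \<psi> a - \<phi>' a)" if "\<phi>' \<in> l1_mult f" for \<phi>'
    using that by (intro dual_norm_nonneg l1_dual_diff[OF \<psi>]) (simp add: l1_mult_def)
  then have "bdd_below {dual_norm (\<lambda>a. \<psi> a - \<phi>' a) | \<phi>'. \<phi>' \<in> l1_mult f}"
    by (auto intro: bdd_belowI[of _ 0])
  then show ?thesis unfolding dist_mult_def by (rule cInf_lower[rotated]) (use \<phi> in blast)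
qed

section \<open>Rounding almost idempotent numbers\<close>

lemma near_idempotent_real:
  fixes r q d :: real
  assumes "r \<ge> 0" "q \<ge> 0" "r + q \<ge> 1" "r * q \<le> d" "d \<le> 1/16"
  shows "r \<le> 2*d \<or> q \<le> 2*d"
proof (cases "r \<le> 1/2")
  case True
  then have "r * (1/2) \<le> r * q" using assms by (intro mult_left_mono) auto
  then show ?thesis using assms by linarith
next
  case r_big: False
  show ?thesis
  proof (cases "q \<le> 1/2")
    case True
    then have "(1/2) * q \<le> r * q" using assms r_big by (intro mult_right_mono) auto
    then show ?thesis using assms by linarith
  next
    case False
    then have "(1/2) * (1/2) \<le> r * q" using r_big by (intro mult_mono) auto
    then show ?thesis using assms by linarith
  qed
qed

lemma near_idempotent_complex:
  fixes z :: complex and d :: real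
  assumes "norm (z - z * z) \<le> d" "d \<le> 1/16"
  shows "norm z \<le> 2*d \<or> norm (1 - z) \<le> 2*d"
proof (rule near_idempotent_real)
  have "z - z * z = z * (1 - z)" by (simp add: algebra_simps)
  then show "norm z * norm (1 - z) \<le> d" using assms(1) by (simp add: norm_mult)
  show "norm z + norm (1 - z) \<ge> 1" using norm_triangle_ineq[of z "1 - z"] by simp
qed (use assms in auto)

lemma rounding_multiplicative:
  fixes P Q R c1 c2 c3 :: complex and d :: real
  assumes c: "c1 \<in> {0,1}" "c2 \<in> {0,1}" "c3 \<in> {0,1}"
    and close: "norm (P - c3) \<le> 2*d" "norm (Q - c1) \<le> 2*d" "norm (R - c2) \<le> 2*d"
    and defect: "norm (P - Q * R) \<le> d" and small: "d \<le> 1/16"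
  shows "c3 = c1 * c2"
proof (rule ccontr)
  assume "c3 \<noteq> c1 * c2"
  then have one: "norm (c3 - c1 * c2) = 1" using c by auto
  have d0: "d \<ge> 0" using defect norm_ge_zero order_trans by blast
  have "norm R \<le> norm (R - c2) + norm c2" using norm_triangle_ineq[of "R - c2" c2] by simp
  then have R_bound: "norm R \<le> 1 + 2*d" using close(3) c(2) by auto
  have "Q * R - c1 * c2 = (Q - c1) * R + c1 * (R - c2)" by (simp add: algebra_simps)
  then have "norm (Q * R - c1 * c2) \<le> norm (Q - c1) * norm R + norm c1 * norm (R - c2)"
    by (metis norm_mult norm_triangle_ineq)
  also have "\<dots> \<le> (2*d) * (1 + 1/8) + 1 * (2*d)"
    using close R_bound c(1) d0 small by (intro add_mono mult_mono) auto
  finally have QR: "norm (Q * R - c1 * c2) \<le> (17/4) * d" by simp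
  have "c3 - c1 * c2 = (c3 - P) + (P - Q * R) + (Q * R - c1 * c2)" by simp
  then have "norm (c3 - c1 * c2) \<le> norm (c3 - P) + norm (P - Q * R) + norm (Q * R - c1 * c2)"
    by (metis norm_triangle_ineq order_trans add_right_mono)
  then have "1 \<le> 2*d + d + (17/4) * d"
    using one close(1) defect QR by (simp add: norm_minus_commute)
  then show False using small by linarith
qed

section \<open>Stability of almost multiplicative functionals\<close>

lemma rounding_semicharacter:
  fixes f :: "'a \<Rightarrow> 'a \<Rightarrow> 'a" and p :: "'a \<Rightarrow> complex"
  assumes idem: "\<And>x. f x x = x"
    and p_defect: "\<And>x y. norm (p (f x y) - p x * p y) \<le> \<delta>" and small: "\<delta> \<le> 1/16"
  obtains \<theta> where "\<And>x. norm (p x - \<theta> x) \<le> 2*\<delta>" and "\<And>x. norm (\<theta> x) \<le> 1"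
    and "\<And>x y. \<theta> (f x y) = \<theta> x * \<theta> y"
proof -
  define \<theta> where "\<theta> x = (if norm (1 - p x) \<le> 2*\<delta> then 1 else 0 :: complex)" for x
  have close: "norm (p x - \<theta> x) \<le> 2*\<delta>" for x
  proof -
    have "norm (p x - p x * p x) \<le> \<delta>" using p_defect[of x x] idem by simp
    then have "norm (p x) \<le> 2*\<delta> \<or> norm (1 - p x) \<le> 2*\<delta>"
      using near_idempotent_complex small by blast
    then show ?thesis unfolding \<theta>_def by (auto simp: norm_minus_commute)
  qed
  have \<theta>_values: "\<theta> x \<in> {0,1}" for x unfolding \<theta>_def by auto
  have "\<theta> (f x y) = \<theta> x * \<theta> y" for x y
    by (rule rounding_multiplicative[OF \<theta>_values \<theta>_values \<theta>_values close close close p_defect small])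
  moreover have "norm (\<theta> x) \<le> 1" for x unfolding \<theta>_def by auto
  ultimately show ?thesis using that close by blast
qed

text \<open>For an idempotent operation f, every bounded functional \<psi> on l1 with defect at most
  1/16 lies within distance 2 def(\<psi>) of a multiplicative functional, namely the one
  induced by the rounding of s \<mapsto> \<psi>(\<delta>_s).\<close>
lemma near_multiplicative_close:
  fixes f :: "'a \<Rightarrow> 'a \<Rightarrow> 'a"
  assumes idem: "\<And>x. f x x = x" and \<psi>: "\<psi> \<in> l1_dual" and small: "mult_defect f \<psi> \<le> 1/16"
  shows "\<exists>\<phi>\<in>l1_mult f. dual_norm (\<lambda>a. \<psi> a - \<phi> a) \<le> 2 * mult_defect f \<psi>"
proof -
  define \<delta> where "\<delta> = mult_defect f \<psi>"
  have p_defect: "norm (\<psi> (point_mass (f x y)) - \<psi> (point_mass x) * \<psi> (point_mass y)) \<le> \<delta>"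
    for x y unfolding \<delta>_def by (rule mult_defect_point_masses[OF \<psi>])
  obtain \<theta> where close: "\<And>x. norm (\<psi> (point_mass x) - \<theta> x) \<le> 2*\<delta>"
    and bound: "\<And>x. norm (\<theta> x) \<le> 1" and mult: "\<And>x y. \<theta> (f x y) = \<theta> x * \<theta> y"
    using rounding_semicharacter[OF idem p_defect] small unfolding \<delta>_def by blast
  have \<delta>_nonneg: "0 \<le> \<delta>"
    using p_defect[of undefined undefined] norm_ge_zero order_trans by blast
  have \<phi>: "char_functional \<theta> \<in> l1_mult f"
    by (rule char_functional_multiplicative[OF bound mult])
  have diff: "(\<lambda>a. \<psi> a - char_functional \<theta> a) \<in> l1_dual"
    using \<phi> \<psi> by (intro l1_dual_diff) (auto simp: l1_mult_def)
  have "dual_norm (\<lambda>a. \<psi> a - char_functional \<theta> a) \<le> 2*\<delta>"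
  proof (rule dual_norm_le)
    fix a :: "'a \<Rightarrow> complex" assume a: "a \<in> l1" "l1_norm a \<le> 1"
    have "norm (\<psi> a - char_functional \<theta> a) \<le> 2*\<delta> * l1_norm a"
      using l1_dual_bound_from_point_masses[OF diff _ a(1), of "2*\<delta>"] close
      by (simp add: char_functional_point_mass)
    also have "\<dots> \<le> 2*\<delta>"
      using mult_left_le[OF a(2), of "2*\<delta>"] \<delta>_nonneg by simp
    finally show "norm (\<psi> a - char_functional \<theta> a) \<le> 2*\<delta>" .
  qed
  then show ?thesis using \<phi> unfolding \<delta>_def by blast
qed

theorem theoremt:
  fixes f :: "'a \<Rightarrow> 'a \<Rightarrow> 'a"
  assumes "semilattice f"
  shows "l1_AMNM f"
  unfolding l1_AMNM_def
proof (intro allI impI)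
  have idem: "\<And>x. f x x = x" by (rule semilattice.idem[OF assms])
  fix \<epsilon> :: real assume "\<epsilon> > 0"
  define \<delta> where "\<delta> = min (\<epsilon>/2) (1/16)"
  have "dist_mult f \<psi> \<le> \<epsilon>" if \<psi>: "\<psi> \<in> l1_dual" and md: "mult_defect f \<psi> \<le> \<delta>" for \<psi>
  proof -
    obtain \<phi> where \<phi>: "\<phi> \<in> l1_mult f"
      and near: "dual_norm (\<lambda>a. \<psi> a - \<phi> a) \<le> 2 * mult_defect f \<psi>"
      using near_multiplicative_close[where f = f, OF idem \<psi>] md by (auto simp: \<delta>_def)
    have "dist_mult f \<psi> \<le> dual_norm (\<lambda>a. \<psi> a - \<phi> a)" by (rule dist_mult_le[OF \<psi> \<phi>])
    also have "\<dots> \<le> 2 * mult_defect f \<psi>" by (rule near)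
    also have "\<dots> \<le> \<epsilon>" using md by (simp add: \<delta>_def)
    finally show ?thesis .
  qed
  moreover have "\<delta> > 0" using \<open>\<epsilon> > 0\<close> by (simp add: \<delta>_def)
  ultimately show "\<exists>\<delta>>0. \<forall>\<psi>\<in>l1_dual. mult_defect f \<psi> \<le> \<delta> \<longrightarrow> dist_mult f \<psi> \<le> \<epsilon>"
    by blast
qed

end
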